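(* Let $G$ be a fullerene graph with a perfect star packing $S$ of type $P0$. Then $G-C(S)$ contains no cycle of odd length that is a non-facial cycle of $G$.
   Context: A fullerene graph is a finite simple connected (equivalently, $3$-connected) plane cubic graph all of whose faces are pentagons or hexagons. A perfect star packing of $G$ is a spanning subgraph $S$ of $G$ every connected component of which is isomorphic to $K_{1,3}$; $C(S)$ denotes the set of centers (degree-$3$ vertices) of the stars in $S$. $S$ is of type $P0$ if no vertex of $C(S)$ lies on a pentagonal face of $G$. A cycle of $G$ is facial if it bounds a face of $G$, non-facial otherwise. *)

theory Defs
  imports Main
begin

text \<open>Plane embeddings are represented combinatorially by a rotation system rot
(rot v is a cyclic permutation of the neighbours of v); the faces are the
orbits of the face-tracing map on darts, and the embedding is plane (genus 0)
iff Euler's formula V - E + F = 2 holds (the graph being connected).\<close>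

definition neighbours :: "('v \<Rightarrow> 'v \<Rightarrow> bool) \<Rightarrow> 'v \<Rightarrow> 'v set" where
  "neighbours adj v = {u. adj v u}"

definition simple_graph :: "'v set \<Rightarrow> ('v \<Rightarrow> 'v \<Rightarrow> bool) \<Rightarrow> bool" where
  "simple_graph V adj \<longleftrightarrow> finite V \<and> (\<forall>u v. adj u v \<longrightarrow> u \<in> V \<and> v \<in> V \<and> adj v u \<and> u \<noteq> v)"

definition graph_edges :: "('v \<Rightarrow> 'v \<Rightarrow> bool) \<Rightarrow> 'v set set" where
  "graph_edges adj = {{u, v} | u v. adj u v}"

definition connected_graph :: "'v set \<Rightarrow> ('v \<Rightarrow> 'v \<Rightarrow> bool) \<Rightarrow> bool" where
  "connected_graph V adj \<longleftrightarrow> V \<noteq> {} \<and> (\<forall>u\<in>V. \<forall>v\<in>V. (adj\<^sup>*\<^sup>*) u v)"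

definition cubic :: "'v set \<Rightarrow> ('v \<Rightarrow> 'v \<Rightarrow> bool) \<Rightarrow> bool" where
  "cubic V adj \<longleftrightarrow> (\<forall>v\<in>V. card (neighbours adj v) = 3)"

definition rotation_system :: "'v set \<Rightarrow> ('v \<Rightarrow> 'v \<Rightarrow> bool) \<Rightarrow> ('v \<Rightarrow> 'v \<Rightarrow> 'v) \<Rightarrow> bool" where
  "rotation_system V adj rot \<longleftrightarrow>
     (\<forall>v\<in>V. bij_betw (rot v) (neighbours adj v) (neighbours adj v) \<and>
        (\<forall>u\<in>neighbours adj v. \<forall>w\<in>neighbours adj v. \<exists>k. (rot v ^^ k) u = w))"

definition darts :: "('v \<Rightarrow> 'v \<Rightarrow> bool) \<Rightarrow> ('v \<times> 'v) set" where
  "darts adj = {(u, v). adj u v}"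

definition face_step :: "('v \<Rightarrow> 'v \<Rightarrow> 'v) \<Rightarrow> 'v \<times> 'v \<Rightarrow> 'v \<times> 'v" where
  "face_step rot d = (snd d, rot (snd d) (fst d))"

definition face_of :: "('v \<Rightarrow> 'v \<Rightarrow> 'v) \<Rightarrow> 'v \<times> 'v \<Rightarrow> ('v \<times> 'v) set" where
  "face_of rot d = {(face_step rot ^^ n) d | n. True}"

definition faces :: "('v \<Rightarrow> 'v \<Rightarrow> bool) \<Rightarrow> ('v \<Rightarrow> 'v \<Rightarrow> 'v) \<Rightarrow> ('v \<times> 'v) set set" where
  "faces adj rot = face_of rot ` darts adj"

text \<open>Length of a face = number of darts on its boundary walk; vertices and edges of a face.\<close>
definition face_vertices :: "('v \<times> 'v) set \<Rightarrow> 'v set" where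
  "face_vertices f = fst ` f"

definition face_edges :: "('v \<times> 'v) set \<Rightarrow> 'v set set" where
  "face_edges f = {{u, v} | u v. (u, v) \<in> f}"

definition plane_embedding :: "'v set \<Rightarrow> ('v \<Rightarrow> 'v \<Rightarrow> bool) \<Rightarrow> ('v \<Rightarrow> 'v \<Rightarrow> 'v) \<Rightarrow> bool" where
  "plane_embedding V adj rot \<longleftrightarrow> rotation_system V adj rot \<and>
     int (card V) - int (card (graph_edges adj)) + int (card (faces adj rot)) = 2"

definition fullerene :: "'v set \<Rightarrow> ('v \<Rightarrow> 'v \<Rightarrow> bool) \<Rightarrow> ('v \<Rightarrow> 'v \<Rightarrow> 'v) \<Rightarrow> bool" where
  "fullerene V adj rot \<longleftrightarrow> simple_graph V adj \<and> connected_graph V adj \<and> cubic V adj \<and>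
     plane_embedding V adj rot \<and> (\<forall>f\<in>faces adj rot. card f = 5 \<or> card f = 6)"

definition pentagonal_faces :: "('v \<Rightarrow> 'v \<Rightarrow> bool) \<Rightarrow> ('v \<Rightarrow> 'v \<Rightarrow> 'v) \<Rightarrow> ('v \<times> 'v) set set" where
  "pentagonal_faces adj rot = {f \<in> faces adj rot. card f = 5}"

text \<open>Perfect star packing: a spanning subgraph (edge relation S \<le> adj, symmetric) every
component of which is a K_{1,3}: each vertex v lies in a set {c,x,y,z} of four distinct
vertices whose incident S-edges are exactly cx, cy, cz (so this set is the component of v
in (V,S) and it is a star with centre c).\<close>
definition perfect_star_packing ::
  "'v set \<Rightarrow> ('v \<Rightarrow> 'v \<Rightarrow> bool) \<Rightarrow> ('v \<Rightarrow> 'v \<Rightarrow> bool) \<Rightarrow> bool" where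
  "perfect_star_packing V adj S \<longleftrightarrow>
     (\<forall>u v. S u v \<longrightarrow> adj u v \<and> S v u) \<and>
     (\<forall>v\<in>V. \<exists>c x y z. distinct [c, x, y, z] \<and> v \<in> {c, x, y, z} \<and>
        {{a, b} | a b. S a b \<and> a \<in> {c, x, y, z}} = {{c, x}, {c, y}, {c, z}})"

definition star_centers :: "'v set \<Rightarrow> ('v \<Rightarrow> 'v \<Rightarrow> bool) \<Rightarrow> 'v set" where
  "star_centers V S = {v \<in> V. card {u. S v u} = 3}"

definition type_P0 ::
  "'v set \<Rightarrow> ('v \<Rightarrow> 'v \<Rightarrow> bool) \<Rightarrow> ('v \<Rightarrow> 'v \<Rightarrow> 'v) \<Rightarrow> ('v \<Rightarrow> 'v \<Rightarrow> bool) \<Rightarrow> bool" where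
  "type_P0 V adj rot S \<longleftrightarrow>
     (\<forall>f\<in>pentagonal_faces adj rot. face_vertices f \<inter> star_centers V S = {})"

definition is_cycle :: "'v set \<Rightarrow> ('v \<Rightarrow> 'v \<Rightarrow> bool) \<Rightarrow> 'v list \<Rightarrow> bool" where
  "is_cycle V adj cs \<longleftrightarrow> length cs \<ge> 3 \<and> distinct cs \<and> set cs \<subseteq> V \<and>
     (\<forall>i < length cs. adj (cs ! i) (cs ! ((i + 1) mod length cs)))"

definition cycle_edges :: "'v list \<Rightarrow> 'v set set" where
  "cycle_edges cs = {{cs ! i, cs ! ((i + 1) mod length cs)} | i. i < length cs}"

definition facial_cycle :: "('v \<Rightarrow> 'v \<Rightarrow> bool) \<Rightarrow> ('v \<Rightarrow> 'v \<Rightarrow> 'v) \<Rightarrow> 'v list \<Rightarrow> bool" where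
  "facial_cycle adj rot cs \<longleftrightarrow> (\<exists>f\<in>faces adj rot. cycle_edges cs = face_edges f)"

end

theory Submission
  imports Defs "HOL-Combinatorics.Orbits"
begin

text \<open>Walk along a cycle that avoids the star centres. Every vertex on it is a leaf of its
  star, so its third neighbour is a centre, and at each vertex the rotation either continues
  the boundary of a face along the cycle (a forward turn) or sends it to that centre. If all
  turns agree, the faces traced along the cycle show that it bounds a face. Otherwise look at
  a change of turn: the face passing there contains a centre, hence is a hexagon by type P0,
  and since centres are pairwise non-adjacent and no vertex has two centre neighbours, centres
  on its boundary are at least three steps apart. Chasing this hexagon shows that the turn
  changes again exactly three steps later. So the turn flips every third step, and three
  times around a cycle of odd length it comes back flipped, which is absurd.\<close>

lemma funpow_card_iterates_self:
  assumes "finite A" and "f ` A \<subseteq> A" and "inj_on f A" and "x \<in> A"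
  shows "(f ^^ card {(f ^^ n) x | n. True}) x = x"
proof -
  define g where "g y = (if y \<in> A then f y else y)" for y
  have "f ` A = A"
    using assms(1-3) by (rule endo_inj_surj)
  then have "bij_betw g A A"
    using assms(3) unfolding bij_betw_def inj_on_def g_def by (auto simp: image_iff)
  then have "g permutes A"
    by (rule bij_imp_permutes) (simp add: g_def)
  then have perm: "permutation g"
    using assms(1) permutation_permutes by blast
  have g_f: "(g ^^ n) x = (f ^^ n) x \<and> (f ^^ n) x \<in> A" for n
    by (induction n) (use assms(2,4) in \<open>auto simp: g_def\<close>)
  define p where "p = funpow_dist1 g x x"
  have self: "x \<in> orbit g x"
    using perm by (rule permutation_self_in_orbit)
  have "{(f ^^ n) x | n. True} = orbit g x"
    using orbit_altdef_permutation[OF perm] g_f by simp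
  also have "\<dots> = (\<lambda>n. (g ^^ n) x) ` {0..<p}"
    unfolding p_def using self by (rule orbit_conv_funpow_dist1)
  finally have "card {(f ^^ n) x | n. True} = p"
    using inj_on_funpow_dist1[OF self] card_image unfolding p_def by fastforce
  then show ?thesis
    using funpow_dist1_prop[OF self] g_f unfolding p_def by metis
qed

locale cubic_graph =
  fixes V :: "'v set" and adj :: "'v \<Rightarrow> 'v \<Rightarrow> bool"
  assumes simple: "simple_graph V adj"
    and cubic: "cubic V adj"
begin

lemma finite_V: "finite V"
  using simple unfolding simple_graph_def by blast

lemma adj_sym: "adj u v \<Longrightarrow> adj v u"
  and adj_in_V: "adj u v \<Longrightarrow> u \<in> V" "adj u v \<Longrightarrow> v \<in> V"
  using simple unfolding simple_graph_def by blast+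

lemma finite_neighbours: "finite (neighbours adj v)"
  using finite_V adj_in_V(2) by (auto simp: neighbours_def intro: finite_subset)

lemma card_neighbours: "v \<in> V \<Longrightarrow> card (neighbours adj v) = 3"
  using cubic unfolding cubic_def by blast

lemma neighbours_eq:
  assumes "adj v a" "adj v b" "adj v c" "distinct [a, b, c]"
  shows "neighbours adj v = {a, b, c}"
proof (rule card_subset_eq[symmetric])
  show "{a, b, c} \<subseteq> neighbours adj v"
    using assms by (simp add: neighbours_def)
  show "card {a, b, c} = card (neighbours adj v)"
    using assms adj_in_V(1)[OF assms(1)] by (simp add: card_neighbours)
qed (rule finite_neighbours)

end

locale cubic_star_packing = cubic_graph +
  fixes S :: "'v \<Rightarrow> 'v \<Rightarrow> bool"
  assumes packing: "perfect_star_packing V adj S"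
begin

abbreviation centres :: "'v set" where
  "centres \<equiv> star_centers V S"

lemma S_adj: "S u v \<Longrightarrow> adj u v"
  and S_sym: "S u v \<Longrightarrow> S v u"
  using packing unfolding perfect_star_packing_def by blast+

lemma star_containing:
  assumes "v \<in> V"
  obtains c x y z where "distinct [c, x, y, z]" "v \<in> {c, x, y, z}"
    "{u. S c u} = {x, y, z}" "\<And>w. w \<in> {x, y, z} \<Longrightarrow> {u. S w u} = {c}"
proof -
  obtain c x y z where dist: "distinct [c, x, y, z]" and v: "v \<in> {c, x, y, z}"
    and E: "{{a, b} | a b. S a b \<and> a \<in> {c, x, y, z}} = {{c, x}, {c, y}, {c, z}}"
    using packing assms unfolding perfect_star_packing_def
    by (elim conjE bspec[elim_format] exE) blast
  have S_iff: "S a b \<longleftrightarrow> {a, b} \<in> {{c, x}, {c, y}, {c, z}}" if "a \<in> {c, x, y, z}" for a b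
  proof
    assume "S a b"
    then have "{a, b} \<in> {{a, b} | a b. S a b \<and> a \<in> {c, x, y, z}}"
      using that by blast
    then show "{a, b} \<in> {{c, x}, {c, y}, {c, z}}"
      unfolding E .
  next
    assume "{a, b} \<in> {{c, x}, {c, y}, {c, z}}"
    then obtain a' b' where "S a' b'" "{a, b} = {a', b'}"
      unfolding E[symmetric] by blast
    then show "S a b"
      using S_sym by (metis doubleton_eq_iff)
  qed
  have "{u. S c u} = {x, y, z}"
    using dist by (auto simp: S_iff doubleton_eq_iff)
  moreover have "{u. S w u} = {c}" if "w \<in> {x, y, z}" for w
    using dist that by (auto simp: S_iff doubleton_eq_iff)
  ultimately show thesis
    using that dist v by blast
qed

lemma leaf_has_centre:
  assumes "v \<in> V" "v \<notin> centres"
  obtains c where "c \<in> centres" "{u. S v u} = {c}"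
proof -
  obtain c x y z where dist: "distinct [c, x, y, z]" and v: "v \<in> {c, x, y, z}"
    and Sc: "{u. S c u} = {x, y, z}" and leaf: "\<And>w. w \<in> {x, y, z} \<Longrightarrow> {u. S w u} = {c}"
    using star_containing[OF assms(1)] by blast
  have "c \<in> V"
    using Sc adj_in_V(1) S_adj by blast
  then have "c \<in> centres"
    using Sc dist by (simp add: star_centers_def)
  moreover have "v \<noteq> c"
    using assms \<open>c \<in> centres\<close> by blast
  ultimately show thesis
    using that leaf v by blast
qed

lemma S_centre_not_centre:
  assumes "c \<in> centres" "S c u"
  shows "u \<notin> centres"
proof -
  have "c \<in> V" and card_c: "card {u. S c u} = 3"
    using assms(1) by (simp_all add: star_centers_def)
  then obtain c' x y z where dist: "distinct [c', x, y, z]" and c: "c \<in> {c', x, y, z}"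
    and Sc: "{u. S c' u} = {x, y, z}" and leaf: "\<And>w. w \<in> {x, y, z} \<Longrightarrow> {u. S w u} = {c'}"
    using star_containing by blast
  have "c \<notin> {x, y, z}"
  proof
    assume "c \<in> {x, y, z}"
    then have "card {u. S c u} = 1"
      using leaf by simp
    with card_c show False
      by simp
  qed
  with c assms(2) Sc have "u \<in> {x, y, z}"
    by auto
  then have "card {w. S u w} = 1"
    using leaf by simp
  then show ?thesis
    by (simp add: star_centers_def)
qed

lemma S_centre_iff_adj:
  assumes "c \<in> centres"
  shows "S c u \<longleftrightarrow> adj c u"
proof -
  have "{u. S c u} = neighbours adj c"
  proof (rule card_subset_eq[OF finite_neighbours])
    show "{u. S c u} \<subseteq> neighbours adj c"
      using S_adj by (auto simp: neighbours_def)
    show "card {u. S c u} = card (neighbours adj c)"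
      using assms by (simp add: star_centers_def card_neighbours)
  qed
  then show ?thesis
    by (auto simp: neighbours_def)
qed

lemma centres_not_adjacent: "c \<in> centres \<Longrightarrow> adj c u \<Longrightarrow> u \<notin> centres"
  using S_centre_iff_adj S_centre_not_centre by blast

lemma adjacent_centres_eq:
  assumes "c \<in> centres" "c' \<in> centres" "adj w c" "adj w c'"
  shows "c = c'"
proof -
  have "S w c" "S w c'"
    using assms S_centre_iff_adj adj_sym S_sym by blast+
  moreover have "w \<notin> centres"
    using assms(1,3) adj_sym centres_not_adjacent by blast
  moreover obtain c0 where "{u. S w u} = {c0}"
    using leaf_has_centre adj_in_V(1)[OF assms(3)] \<open>w \<notin> centres\<close> by blast
  ultimately have "c \<in> {c0}" "c' \<in> {c0}"
    by (metis mem_Collect_eq)+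
  then show ?thesis
    by simp
qed

definition star_centre :: "'v \<Rightarrow> 'v" where
  "star_centre v = (THE c. c \<in> centres \<and> adj v c)"

lemma star_centre:
  assumes "v \<in> V" "v \<notin> centres"
  shows "star_centre v \<in> centres" "adj v (star_centre v)"
proof -
  obtain c where "c \<in> centres" "{u. S v u} = {c}"
    using leaf_has_centre assms by blast
  then have "c \<in> centres \<and> adj v c"
    using S_adj by blast
  then have "star_centre v = c"
    unfolding star_centre_def using adjacent_centres_eq by (intro the_equality) blast+
  with \<open>c \<in> centres \<and> adj v c\<close> show "star_centre v \<in> centres" "adj v (star_centre v)"
    by simp_all
qed

lemma adj_centre_eq_star_centre:
  "v \<in> V \<Longrightarrow> v \<notin> centres \<Longrightarrow> c \<in> centres \<Longrightarrow> adj v c \<Longrightarrow> c = star_centre v"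
  using star_centre adjacent_centres_eq by blast

end

locale cubic_rotation_graph = cubic_graph +
  fixes rot :: "'v \<Rightarrow> 'v \<Rightarrow> 'v"
  assumes rotation: "rotation_system V adj rot"
begin

lemma bij_betw_rot: "v \<in> V \<Longrightarrow> bij_betw (rot v) (neighbours adj v) (neighbours adj v)"
  using rotation unfolding rotation_system_def by blast

lemma rot_adj: "adj v u \<Longrightarrow> adj v (rot v u)"
  using bij_betwE[OF bij_betw_rot] adj_in_V(1) by (simp add: neighbours_def)

lemma rot_inj: "adj v u \<Longrightarrow> adj v w \<Longrightarrow> rot v u = rot v w \<Longrightarrow> u = w"
  using bij_betw_imp_inj_on[OF bij_betw_rot] adj_in_V(1)
  unfolding inj_on_def neighbours_def by blast

lemma rot_no_fixpoint:
  assumes "adj v u"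
  shows "rot v u \<noteq> u"
proof
  assume fixed: "rot v u = u"
  have "v \<in> V"
    using assms adj_in_V(1) by blast
  then have "neighbours adj v \<noteq> {u}"
    using card_neighbours by force
  then obtain w where w: "adj v w" "w \<noteq> u"
    using assms by (auto simp: neighbours_def)
  have "\<forall>u\<in>neighbours adj v. \<forall>w\<in>neighbours adj v. \<exists>k. (rot v ^^ k) u = w"
    using rotation \<open>v \<in> V\<close> unfolding rotation_system_def by blast
  then obtain k where "(rot v ^^ k) u = w"
    using assms w by (auto simp: neighbours_def)
  moreover have "(rot v ^^ k) u = u"
    using fixed by (induction k) auto
  ultimately show False
    using w by simp
qed

lemma rot_three_cycle:
  assumes "adj v a" "adj v b" "adj v c" "distinct [a, b, c]"
  shows "rot v a = b \<and> rot v b = c \<and> rot v c = a \<or> rot v a = c \<and> rot v c = b \<and> rot v b = a"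
proof -
  have "neighbours adj v = {a, b, c}"
    using assms by (rule neighbours_eq)
  then have rot_in: "rot v x \<in> {a, b, c} - {x}" if "adj v x" for x
    using rot_adj[OF that] rot_no_fixpoint[OF that] unfolding neighbours_def by blast
  have "rot v a \<in> {b, c}" "rot v b \<in> {a, c}" "rot v c \<in> {a, b}"
    using rot_in[OF assms(1)] rot_in[OF assms(2)] rot_in[OF assms(3)] by auto
  moreover have "rot v a \<noteq> rot v b" "rot v a \<noteq> rot v c" "rot v b \<noteq> rot v c"
    using assms(4) rot_inj[OF assms(1,2)] rot_inj[OF assms(1,3)] rot_inj[OF assms(2,3)] by auto
  ultimately show ?thesis
    by auto
qed

lemma face_step_darts: "d \<in> darts adj \<Longrightarrow> face_step rot d \<in> darts adj"
  using rot_adj adj_sym by (auto simp: darts_def face_step_def)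

lemma inj_on_face_step: "inj_on (face_step rot) (darts adj)"
  by (rule inj_onI) (clarsimp simp: darts_def face_step_def, metis rot_inj adj_sym)

lemma finite_darts: "finite (darts adj)"
proof (rule finite_subset)
  show "darts adj \<subseteq> V \<times> V"
    using adj_in_V by (auto simp: darts_def)
qed (simp add: finite_V)

definition face_walk :: "'v \<times> 'v \<Rightarrow> nat \<Rightarrow> 'v" where
  "face_walk d k = fst ((face_step rot ^^ k) d)"

lemma face_step_funpow: "(face_step rot ^^ k) d = (face_walk d k, face_walk d (Suc k))"
  by (simp add: face_walk_def face_step_def prod_eq_iff)

lemma face_walk_0: "face_walk d 0 = fst d"
  and face_walk_1: "face_walk d 1 = snd d"
  by (simp_all add: face_walk_def face_step_def)

lemma face_walk_rot: "face_walk d (k + 2) = rot (face_walk d (k + 1)) (face_walk d k)"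
proof -
  have "(face_step rot ^^ Suc k) d = face_step rot (face_walk d k, face_walk d (Suc k))"
    using face_step_funpow[of k d] by simp
  then show ?thesis
    unfolding face_step_funpow[of "Suc k" d] by (simp add: face_step_def)
qed

lemma face_walk_adj:
  assumes "d \<in> darts adj"
  shows "adj (face_walk d k) (face_walk d (k + 1))"
proof -
  have "(face_step rot ^^ k) d \<in> darts adj"
    using assms face_step_darts by (induction k) auto
  then show ?thesis
    by (simp add: face_step_funpow darts_def)
qed

lemma face_walk_no_backtrack:
  assumes "d \<in> darts adj"
  shows "face_walk d (k + 2) \<noteq> face_walk d k"
  using face_walk_rot[of d k] face_walk_adj[OF assms, of k] adj_sym rot_no_fixpoint by metis

lemma face_walk_periodic:
  assumes "d \<in> darts adj"
  shows "face_walk d (k + card (face_of rot d)) = face_walk d k"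
proof -
  have "(face_step rot ^^ card (face_of rot d)) d = d"
    unfolding face_of_def using finite_darts face_step_darts inj_on_face_step assms
    by (intro funpow_card_iterates_self) auto
  then show ?thesis
    unfolding face_walk_def by (simp add: funpow_add)
qed

lemma face_edges_face_of:
  "face_edges (face_of rot d) = range (\<lambda>k. {face_walk d k, face_walk d (Suc k)})"
proof -
  have "face_of rot d = range (\<lambda>k. (face_walk d k, face_walk d (Suc k)))"
    unfolding face_of_def face_step_funpow by blast
  then show ?thesis
    unfolding face_edges_def by (auto simp: image_iff)
qed

lemma face_walk_in_face: "face_walk d k \<in> face_vertices (face_of rot d)"
  by (auto simp: face_walk_def face_vertices_def face_of_def)

end

locale embedded_star_packing = cubic_rotation_graph V adj rot + cubic_star_packing V adj S
  for V :: "'v set" and adj rot S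
begin

lemma face_walk_centres_apart:
  assumes "d \<in> darts adj" "face_walk d i \<in> centres" "face_walk d j \<in> centres"
    and "i \<le> j" "j \<le> i + 2"
  shows "i = j"
proof -
  have adj: "adj (face_walk d k) (face_walk d (k + 1))" for k
    by (rule face_walk_adj[OF assms(1)])
  have "j \<noteq> i + 1"
    using assms(2,3) adj centres_not_adjacent by blast
  moreover have "j \<noteq> i + 2"
  proof
    assume j: "j = i + 2"
    then have "face_walk d j = face_walk d i"
      using adjacent_centres_eq assms(2,3) adj[of i] adj[of "i + 1"] adj_sym
      by (metis add.assoc one_add_one)
    then show False
      using face_walk_no_backtrack[OF assms(1)] j by metis
  qed
  ultimately show ?thesis
    using assms(4,5) by linarith
qed

end

locale hexagonal_star_packing = embedded_star_packing +
  assumes hexagonal: "\<And>f. f \<in> faces adj rot \<Longrightarrow> face_vertices f \<inter> centres \<noteq> {} \<Longrightarrow> card f = 6"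
begin

lemma face_walk_hexagon:
  assumes "d \<in> darts adj" "face_walk d k \<in> centres"
  shows "face_walk d (j + 6) = face_walk d j"
proof -
  have "card (face_of rot d) = 6"
    using hexagonal assms face_walk_in_face unfolding faces_def by blast
  then show ?thesis
    using face_walk_periodic[OF assms(1)] by metis
qed

end

lemma fullerene_type_P0_hexagonal:
  assumes "fullerene V adj rot" "perfect_star_packing V adj S" "type_P0 V adj rot S"
  shows "hexagonal_star_packing V adj rot S"
proof unfold_locales
  show "simple_graph V adj" "cubic V adj" "rotation_system V adj rot"
    using assms(1) by (simp_all add: fullerene_def plane_embedding_def)
  show "perfect_star_packing V adj S"
    by (fact assms(2))
  fix f
  assume "f \<in> faces adj rot" "face_vertices f \<inter> star_centers V S \<noteq> {}"
  then show "card f = 6"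
    using assms(1,3) by (auto simp: fullerene_def type_P0_def pentagonal_faces_def)
qed

locale centre_free_cycle = hexagonal_star_packing +
  fixes cs
  assumes cycle: "is_cycle V adj cs"
    and avoids_centres: "set cs \<inter> centres = {}"
begin

definition cyc :: "int \<Rightarrow> _" where
  "cyc n = cs ! nat (n mod int (length cs))"

abbreviation centre_at :: "int \<Rightarrow> _" where
  "centre_at n \<equiv> star_centre (cyc n)"

text \<open>The face traced through the dart (cyc (n - 1), cyc n) continues along the cycle if
  forward_turn n holds, and turns to the star centre of cyc n otherwise.\<close>

definition forward_turn :: "int \<Rightarrow> bool" where
  "forward_turn n \<longleftrightarrow> rot (cyc n) (cyc (n - 1)) = cyc (n + 1)"

lemma length_ge_3: "length cs \<ge> 3"
  using cycle by (simp add: is_cycle_def)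

lemma cyc_of_nat: "cyc (int k) = cs ! (k mod length cs)"
proof -
  have "cs \<noteq> []"
    using length_ge_3 by auto
  then show ?thesis
    by (simp add: cyc_def flip: of_nat_mod)
qed

lemma cyc_cong: "m mod int (length cs) = n mod int (length cs) \<Longrightarrow> cyc m = cyc n"
  by (simp add: cyc_def)

lemma cyc_index_bounds: "0 \<le> n mod int (length cs)" "n mod int (length cs) < int (length cs)"
proof -
  have "0 < int (length cs)"
    using length_ge_3 by linarith
  then show "0 \<le> n mod int (length cs)" "n mod int (length cs) < int (length cs)"
    by simp_all
qed

lemma cyc_index_less: "nat (n mod int (length cs)) < length cs"
  using cyc_index_bounds by (simp add: nat_less_iff)

lemma cyc_in_set: "cyc n \<in> set cs"
  unfolding cyc_def using cyc_index_less by (rule nth_mem)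

lemma cyc_in_V: "cyc n \<in> V"
  and cyc_not_centre: "cyc n \<notin> centres"
  using cyc_in_set cycle avoids_centres by (auto simp: is_cycle_def)

lemma centre_at: "centre_at n \<in> centres" "adj (cyc n) (centre_at n)"
  using star_centre cyc_in_V cyc_not_centre by blast+

lemma cyc_mod_add: "cyc (n mod int (length cs) + k) = cyc (n + k)"
  by (rule cyc_cong) (simp add: mod_simps)

lemma cyc_edge_of_nat:
  "i < length cs \<Longrightarrow> cyc (int i) = cs ! i \<and> cyc (int i + 1) = cs ! ((i + 1) mod length cs)"
  using cyc_of_nat[of i] cyc_of_nat[of "i + 1"] by (simp add: add.commute)

lemma cyc_edge_nth:
  obtains i where "i < length cs" "cyc n = cs ! i" "cyc (n + 1) = cs ! ((i + 1) mod length cs)"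
proof -
  define i where "i = nat (n mod int (length cs))"
  have "int i = n mod int (length cs)" "i < length cs"
    using cyc_index_bounds cyc_index_less by (simp_all add: i_def)
  then show thesis
    using that cyc_edge_of_nat[of i] cyc_mod_add[of n 0] cyc_mod_add[of n 1] by simp
qed

lemma cyc_adj: "adj (cyc n) (cyc (n + 1))"
proof -
  obtain i where "i < length cs" "cyc n = cs ! i" "cyc (n + 1) = cs ! ((i + 1) mod length cs)"
    by (rule cyc_edge_nth)
  then show ?thesis
    using cycle by (simp add: is_cycle_def)
qed

lemma cyc_add_2_neq: "cyc (n + 2) \<noteq> cyc n"
proof
  assume "cyc (n + 2) = cyc n"
  then have "(n + 2) mod int (length cs) = n mod int (length cs)"
    using cycle cyc_index_less cyc_index_bounds
    by (simp add: cyc_def is_cycle_def nth_eq_iff_index_eq eq_nat_nat_iff)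
  then have "int (length cs) dvd 2"
    by (simp add: mod_eq_dvd_iff)
  then show False
    using length_ge_3 zdvd_imp_le by fastforce
qed

lemma neighbours_cyc:
  shows "adj (cyc n) w \<longleftrightarrow> w = cyc (n - 1) \<or> w = cyc (n + 1) \<or> w = centre_at n"
    and "distinct [cyc (n - 1), cyc (n + 1), centre_at n]"
proof -
  have adj: "adj (cyc n) (cyc (n - 1))" "adj (cyc n) (cyc (n + 1))" "adj (cyc n) (centre_at n)"
    using cyc_adj[of "n - 1"] cyc_adj[of n] centre_at adj_sym by simp_all
  show dist: "distinct [cyc (n - 1), cyc (n + 1), centre_at n]"
    using cyc_add_2_neq[of "n - 1"] cyc_not_centre[of "n - 1"] cyc_not_centre[of "n + 1"] centre_at(1)[of n]
    by (auto simp: add.commute)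
  have "neighbours adj (cyc n) = {cyc (n - 1), cyc (n + 1), centre_at n}"
    using adj dist by (rule neighbours_eq)
  then show "adj (cyc n) w \<longleftrightarrow> w = cyc (n - 1) \<or> w = cyc (n + 1) \<or> w = centre_at n"
    by (auto simp: neighbours_def)
qed

lemma rot_cyc:
  "rot (cyc n) (cyc (n - 1)) = (if forward_turn n then cyc (n + 1) else centre_at n)"
  "rot (cyc n) (cyc (n + 1)) = (if forward_turn n then centre_at n else cyc (n - 1))"
  "rot (cyc n) (centre_at n) = (if forward_turn n then cyc (n - 1) else cyc (n + 1))"
  using rot_three_cycle[of "cyc n" "cyc (n - 1)" "cyc (n + 1)" "centre_at n"] neighbours_cyc
  by (auto simp: forward_turn_def)

lemma cycle_edges_cyc: "cycle_edges cs = range (\<lambda>n. {cyc n, cyc (n + 1)})"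
proof
  show "cycle_edges cs \<subseteq> range (\<lambda>n. {cyc n, cyc (n + 1)})"
  proof
    fix e
    assume "e \<in> cycle_edges cs"
    then obtain i where "i < length cs" "e = {cs ! i, cs ! ((i + 1) mod length cs)}"
      unfolding cycle_edges_def by blast
    then have "e = {cyc (int i), cyc (int i + 1)}"
      using cyc_edge_of_nat by simp
    then show "e \<in> range (\<lambda>n. {cyc n, cyc (n + 1)})"
      by (rule range_eqI)
  qed
  show "range (\<lambda>n. {cyc n, cyc (n + 1)}) \<subseteq> cycle_edges cs"
  proof clarify
    fix n
    obtain i where "i < length cs" "cyc n = cs ! i" "cyc (n + 1) = cs ! ((i + 1) mod length cs)"
      by (rule cyc_edge_nth)
    then show "{cyc n, cyc (n + 1)} \<in> cycle_edges cs"
      unfolding cycle_edges_def by auto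
  qed
qed

lemma facial_if_face_walk_along_cycle:
  assumes "d \<in> darts adj"
    and along: "\<And>k. {face_walk d k, face_walk d (Suc k)} = {cyc (f k), cyc (f k + 1)}"
    and onto: "\<And>n. \<exists>k. f k mod int (length cs) = n mod int (length cs)"
  shows "facial_cycle adj rot cs"
proof -
  have "face_edges (face_of rot d) = range (\<lambda>k. {cyc (f k), cyc (f k + 1)})"
    using along by (simp add: face_edges_face_of)
  also have "\<dots> = range (\<lambda>n. {cyc n, cyc (n + 1)})"
  proof
    show "range (\<lambda>n. {cyc n, cyc (n + 1)}) \<subseteq> range (\<lambda>k. {cyc (f k), cyc (f k + 1)})"
    proof clarify
      fix n
      obtain k where k: "f k mod int (length cs) = n mod int (length cs)"
        using onto by blast
      then have "cyc (f k + j) = cyc (n + j)" for j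
        using cyc_mod_add[of "f k" j] cyc_mod_add[of n j] by simp
      from this[of 0] this[of 1] have "{cyc n, cyc (n + 1)} = {cyc (f k), cyc (f k + 1)}"
        by simp
      then show "{cyc n, cyc (n + 1)} \<in> range (\<lambda>k. {cyc (f k), cyc (f k + 1)})"
        by (rule range_eqI)
    qed
  qed (auto intro: range_eqI)
  also have "\<dots> = cycle_edges cs"
    by (rule cycle_edges_cyc[symmetric])
  finally show ?thesis
    using assms(1) unfolding facial_cycle_def faces_def by blast
qed

lemma facial_if_forward_turns:
  assumes "\<And>n. forward_turn n"
  shows "facial_cycle adj rot cs"
proof (rule facial_if_face_walk_along_cycle)
  define d where "d = (cyc 0, cyc 1)"
  show "d \<in> darts adj"
    using cyc_adj[of 0] by (simp add: d_def darts_def)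
  have "(face_step rot ^^ k) d = (cyc (int k), cyc (int k + 1))" for k
  proof (induction k)
    case (Suc k)
    then show ?case
      using rot_cyc(1)[of "int k + 1"] assms by (simp add: face_step_def add.commute)
  qed (simp add: d_def)
  then show "{face_walk d k, face_walk d (Suc k)} = {cyc (int k), cyc (int k + 1)}" for k
    by (simp add: face_step_funpow add.commute)
  show "\<exists>k. int k mod int (length cs) = n mod int (length cs)" for n
    using cyc_index_bounds by (intro exI[of _ "nat (n mod int (length cs))"]) simp
qed

lemma facial_if_no_forward_turns:
  assumes "\<And>n. \<not> forward_turn n"
  shows "facial_cycle adj rot cs"
proof (rule facial_if_face_walk_along_cycle)
  define d where "d = (cyc 0, cyc (- 1))"
  show "d \<in> darts adj"
    using cyc_adj[of "- 1"] adj_sym by (simp add: d_def darts_def)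
  have walk: "(face_step rot ^^ k) d = (cyc (- int k), cyc (- int k - 1))" for k
  proof (induction k)
    case (Suc k)
    have "rot (cyc (- int k - 1)) (cyc (- int k)) = cyc (- 2 - int k)"
      using rot_cyc(2)[of "- int k - 1"] assms by simp
    moreover have "- int (Suc k) = - int k - 1" "- int (Suc k) - 1 = - 2 - int k"
      by simp_all
    ultimately show ?case
      using Suc by (simp only: funpow.simps comp_apply face_step_def fst_conv snd_conv)
  qed (simp add: d_def)
  show "{face_walk d k, face_walk d (Suc k)} = {cyc (- int k - 1), cyc (- int k - 1 + 1)}" for k
  proof -
    have "face_walk d k = cyc (- int k)" "face_walk d (Suc k) = cyc (- int k - 1)"
      using walk[of k] by (simp_all add: face_step_funpow)
    then show ?thesis
      by (simp only: diff_add_cancel insert_commute)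
  qed
  show "\<exists>k. (- int k - 1) mod int (length cs) = n mod int (length cs)" for n
  proof
    define k where "k = nat ((- n - 1) mod int (length cs))"
    have "int k = (- n - 1) mod int (length cs)"
      using cyc_index_bounds by (simp add: k_def)
    then have "(- int k - 1) mod int (length cs) = (- (- n - 1) - 1) mod int (length cs)"
      by (metis mod_diff_left_eq mod_minus_eq)
    then show "(- int k - 1) mod int (length cs) = n mod int (length cs)"
      by simp
  qed
qed

text \<open>Where the turn changes, the face walk passes a star centre, so it runs around a hexagon.
  Going once around it, with centres at least three steps apart on the walk, fixes the
  next three turns.\<close>

lemma switch_on_forward_turn:
  assumes "\<not> forward_turn i" "forward_turn (i + 1)"
  shows "forward_turn (i + 2) \<and> forward_turn (i + 3) \<and> \<not> forward_turn (i + 4)"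
proof -
  define d where "d = (centre_at i, cyc i)"
  define w where "w = face_walk d"
  have d: "d \<in> darts adj"
    using centre_at(2)[of i] adj_sym by (simp add: d_def darts_def)
  have step: "w (k + 2) = rot (w (k + 1)) (w k)" for k
    unfolding w_def by (rule face_walk_rot)
  have w0: "w 0 = centre_at i" and w1: "w 1 = cyc i"
    unfolding w_def face_walk_0 face_walk_1 by (simp_all add: d_def)
  have w2: "w 2 = cyc (i + 1)"
    using step[of 0] w0 w1 rot_cyc(3)[of i] assms(1) by (simp add: eval_nat_numeral)
  have w3: "w 3 = cyc (i + 2)"
    using step[of 1] w1 w2 rot_cyc(1)[of "i + 1"] assms(2) by (simp add: add.commute eval_nat_numeral)
  have w6: "w 6 = centre_at i"
    using face_walk_hexagon[OF d, of 0 0] w0 centre_at(1) by (simp add: w_def)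
  have not_centre: "w k \<notin> centres" if "k \<in> {4, 5}" for k
    using face_walk_centres_apart[OF d, of k 6] that w6 centre_at(1)[of i] by (auto simp: w_def)
  have w4: "w 4 = rot (cyc (i + 2)) (cyc (i + 1))" and w5: "w 5 = rot (w 4) (cyc (i + 2))"
    and w6': "w 6 = rot (w 5) (w 4)"
    using step[of 2] step[of 3] step[of 4] w2 w3 by (simp_all add: eval_nat_numeral)
  have "forward_turn (i + 2) \<and> w 4 = cyc (i + 3)"
    using w4 rot_cyc(1)[of "i + 2"] not_centre[of 4] centre_at(1)[of "i + 2"]
    by (auto simp: add.commute split: if_split_asm)
  moreover have "forward_turn (i + 3) \<and> w 5 = cyc (i + 4)"
    using w5 calculation rot_cyc(1)[of "i + 3"] not_centre[of 5] centre_at(1)[of "i + 3"]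
    by (auto simp: add.commute split: if_split_asm)
  moreover have "\<not> forward_turn (i + 4)"
    using w6 w6' calculation rot_cyc(1)[of "i + 4"] cyc_not_centre[of "i + 5"] centre_at(1)[of i]
    by (auto simp: add.commute split: if_split_asm)
  ultimately show ?thesis
    by blast
qed

lemma switch_off_forward_turn:
  assumes "forward_turn j" "\<not> forward_turn (j + 1)"
  shows "\<not> forward_turn (j + 2) \<and> \<not> forward_turn (j + 3) \<and> forward_turn (j + 4)"
proof -
  define d where "d = (cyc (j + 2), cyc (j + 1))"
  define w where "w = face_walk d"
  have d: "d \<in> darts adj"
    using cyc_adj[of "j + 1"] adj_sym by (simp add: d_def darts_def add.commute)
  have step: "w (k + 2) = rot (w (k + 1)) (w k)" for k
    unfolding w_def by (rule face_walk_rot)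
  have adj: "adj (w (k + 1)) (w k)" for k
    using face_walk_adj[OF d, of k] adj_sym by (simp add: w_def)
  have w0: "w 0 = cyc (j + 2)" and w1: "w 1 = cyc (j + 1)"
    unfolding w_def face_walk_0 face_walk_1 by (simp_all add: d_def)
  have w2: "w 2 = cyc j"
    using step[of 0] w0 w1 rot_cyc(2)[of "j + 1"] assms(2) by (simp add: add.commute eval_nat_numeral)
  have w3: "w 3 = centre_at j"
    using step[of 1] w1 w2 rot_cyc(2)[of j] assms(1) by (simp add: eval_nat_numeral)
  have w6: "w 6 = cyc (j + 2)" and w7: "w 7 = cyc (j + 1)"
    using face_walk_hexagon[OF d, of 3 0] face_walk_hexagon[OF d, of 3 1] w0 w1 w3 centre_at(1)
    by (simp_all add: w_def)
  have not_centre: "w k \<notin> centres" if "k \<in> {4, 5}" for k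
    using face_walk_centres_apart[OF d, of 3 k] that w3 centre_at(1)[of j] by (auto simp: w_def)
  have w5: "w 5 = cyc (j + 3)"
    using adj[of 5] w6 neighbours_cyc(1)[of "j + 2"] face_walk_no_backtrack[OF d, of 5] w7
      not_centre[of 5] centre_at(1)[of "j + 2"]
    by (auto simp: w_def add.commute)
  then have "rot (cyc (j + 2)) (cyc (j + 3)) = cyc (j + 1)"
    using step[of 5] w6 w7 by simp
  then have ft2: "\<not> forward_turn (j + 2)"
    using rot_cyc(2)[of "j + 2"] cyc_not_centre[of "j + 1"] centre_at(1)[of "j + 2"]
    by (auto simp: add.commute split: if_split_asm)
  have w4: "w 4 = cyc (j + 4)"
    using adj[of 4] w5 neighbours_cyc(1)[of "j + 3"] face_walk_no_backtrack[OF d, of 4] w6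
      not_centre[of 4] centre_at(1)[of "j + 3"]
    by (auto simp: w_def add.commute)
  then have "rot (cyc (j + 3)) (cyc (j + 4)) = cyc (j + 2)"
    using step[of 4] w5 w6 by simp
  then have ft3: "\<not> forward_turn (j + 3)"
    using rot_cyc(2)[of "j + 3"] cyc_not_centre[of "j + 2"] centre_at(1)[of "j + 3"]
    by (auto simp: add.commute split: if_split_asm)
  have "adj (cyc (j + 4)) (centre_at j)"
    using adj[of 3] w3 w4 by simp
  then have "centre_at j = centre_at (j + 4)"
    using adj_centre_eq_star_centre cyc_in_V cyc_not_centre centre_at(1) by blast
  then have "rot (cyc (j + 4)) (centre_at (j + 4)) = cyc (j + 3)"
    using step[of 3] w3 w4 w5 by simp
  then have ft4: "forward_turn (j + 4)"
    using rot_cyc(3)[of "j + 4"] cyc_add_2_neq[of "j + 3"]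
    by (auto simp: add.commute split: if_split_asm)
  show ?thesis
    using ft2 ft3 ft4 by blast
qed

lemma forward_turn_periodic: "forward_turn (n + int (length cs) * m) = forward_turn n"
proof -
  have "(n + int (length cs) * m + k) mod int (length cs) =
      ((n + k) + int (length cs) * m) mod int (length cs)" for k
    by (simp add: ac_simps)
  then have "cyc (n + int (length cs) * m + k) = cyc (n + k)" for k
    by (intro cyc_cong) (simp only: mod_mult_self2)
  from this[of 0] this[of 1] this[of "-1"] show ?thesis
    by (simp add: forward_turn_def)
qed

lemma forward_turn_switch_recurs:
  assumes "forward_turn t \<noteq> forward_turn (t + 1)"
  shows "forward_turn (t + 3) = forward_turn (t + 1) \<and> forward_turn (t + 3) \<noteq> forward_turn (t + 4)"
  using assms switch_on_forward_turn[of t] switch_off_forward_turn[of t] by auto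

lemma forward_turn_switch_every_third:
  assumes "forward_turn t \<noteq> forward_turn (t + 1)"
  shows "forward_turn (t + 3 * int k) \<noteq> forward_turn (t + 3 * int k + 1) \<and>
    forward_turn (t + 3 * int k + 1) = (forward_turn (t + 1) \<noteq> odd k)"
proof (induction k)
  case 0
  then show ?case
    using assms by simp
next
  case (Suc k)
  then show ?case
    using forward_turn_switch_recurs[of "t + 3 * int k"] by (auto simp: algebra_simps)
qed

lemma odd_cycle_forward_turn_Suc:
  assumes "odd (length cs)"
  shows "forward_turn (n + 1) = forward_turn n"
proof (rule ccontr)
  assume "forward_turn (n + 1) \<noteq> forward_turn n"
  then have "forward_turn (n + 1 + int (length cs) * 3) = (\<not> forward_turn (n + 1))"
    using forward_turn_switch_every_third[of n "length cs"] assms by (auto simp: algebra_simps)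
  then show False
    using forward_turn_periodic[of "n + 1" 3] by simp
qed

lemma odd_cycle_forward_turn_const:
  assumes "odd (length cs)"
  shows "forward_turn n = forward_turn 0"
proof (induction n rule: int_induct[of _ 0])
  case (step1 i)
  then show ?case
    using odd_cycle_forward_turn_Suc[OF assms, of i] by simp
next
  case (step2 i)
  then show ?case
    using odd_cycle_forward_turn_Suc[OF assms, of "i - 1"] by simp
qed simp

lemma odd_cycle_facial:
  assumes "odd (length cs)"
  shows "facial_cycle adj rot cs"
proof (cases "forward_turn 0")
  case True
  then show ?thesis
    using odd_cycle_forward_turn_const[OF assms] by (intro facial_if_forward_turns) simp
next
  case False
  then show ?thesis
    using odd_cycle_forward_turn_const[OF assms] by (intro facial_if_no_forward_turns) simp
qed

end

theorem mainTheorem13: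
  fixes V :: "'v set" and adj :: "'v \<Rightarrow> 'v \<Rightarrow> bool" and rot :: "'v \<Rightarrow> 'v \<Rightarrow> 'v"
    and S :: "'v \<Rightarrow> 'v \<Rightarrow> bool"
  assumes "fullerene V adj rot"
    and "perfect_star_packing V adj S"
    and "type_P0 V adj rot S"
  shows "\<not> (\<exists>cs. is_cycle V adj cs \<and> set cs \<inter> star_centers V S = {} \<and>
               odd (length cs) \<and> \<not> facial_cycle adj rot cs)"
proof
  assume "\<exists>cs. is_cycle V adj cs \<and> set cs \<inter> star_centers V S = {} \<and>
               odd (length cs) \<and> \<not> facial_cycle adj rot cs"
  then obtain cs where cycle: "is_cycle V adj cs" "set cs \<inter> star_centers V S = {}"
    and odd: "odd (length cs)" and non_facial: "\<not> facial_cycle adj rot cs"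
    by blast
  interpret centre_free_cycle V adj rot S cs
    using fullerene_type_P0_hexagonal[OF assms] cycle
    by (simp add: centre_free_cycle_def centre_free_cycle_axioms_def)
  show False
    using odd_cycle_facial[OF odd] non_facial by contradiction
qed

end
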